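(* Let $P\subseteq\mathbb{R}^n$ be a permutation-invariant polytope, $x'\in P$, and $\pi$ a permutation of $\{1,\dots,n\}$ with $x'_{\pi(i)}\ge x'_{\pi(i+1)}$ for all $i=1,\dots,n-1$. Then there exists $u'\in P$ with $u'\ge_m x'$ and $u'_\Delta\ne x'_\Delta$ if and only if there does not exist $a\in\mathbb{R}^n$ with $a_{\pi(i)}>a_{\pi(i+1)}$ for all $i=1,\dots,n-1$ such that the inequality $\sum_{i=1}^n a_i(x_i-x'_i)\le0$ holds for all $x\in P$.
   Context: $P$ is permutation-invariant if $x\in P$ implies $Qx\in P$ for every permutation matrix $Q$. $x_{[i]}$ is the $i$-th largest entry; $x\ge_m y$ means $\sum_{i=1}^j x_{[i]}\ge\sum_{i=1}^j y_{[i]}$ for $j<n$ with equality for $j=n$. $x_\Delta=(x_{[1]},\dots,x_{[n]})$. *)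

theory Defs
  imports "HOL-Analysis.Analysis" "HOL-Library.Multiset"
begin

text \<open>Vectors in R^n are modelled as real^'n, with n = CARD('n).\<close>

definition perm_invariant :: "(real^'n) set \<Rightarrow> bool" where
  "perm_invariant P \<longleftrightarrow>
     (\<forall>x\<in>P. \<forall>\<sigma>. \<sigma> permutes (UNIV :: 'n set) \<longrightarrow> (\<chi> i. x $ \<sigma> i) \<in> P)"

text \<open>x_Delta: the entries of x sorted in non-increasing order; its (j+1)-th
  element is x_[j+1] (0-based list indexing).\<close>
definition decr_sort :: "real^'n \<Rightarrow> real list" where
  "decr_sort x = rev (sorted_list_of_multiset (image_mset (\<lambda>i. x $ i) (mset_set (UNIV :: 'n set))))"

definition majorizes :: "real^'n \<Rightarrow> real^'n \<Rightarrow> bool" where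
  "majorizes x y \<longleftrightarrow>
     (\<forall>j. 1 \<le> j \<and> j < CARD('n) \<longrightarrow> sum_list (take j (decr_sort x)) \<ge> sum_list (take j (decr_sort y)))
     \<and> sum_list (decr_sort x) = sum_list (decr_sort y)"

end

theory Submission
  imports Defs
begin

text \<open>If u' \<in> P majorizes x' with a different sorted vector,
  permutation invariance lets us replace u' by its rearrangement u that is sorted along \<pi>.
  Abel summation writes a \<bullet> (u - x') as the sum of (a (\<pi> i) - a (\<pi> (i + 1))) D i, where the
  D i are the gaps between the prefix sums of u and x'; these are nonnegative and not all
  zero, so no a that strictly decreases along \<pi> makes the inequality valid on P.

  Conversely, a point of the convex hull of the differences e (\<pi> i) - e (\<pi> (i + 1)) has
  nonnegative prefix sums along \<pi>, total zero, and some positive prefix sum. So if it equals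
  c (x - x') with c \<ge> 0 and x \<in> P, then x majorizes x' with a different sorted vector. Hence,
  if no such x exists, the cone generated by P - x' (closed, as P is a polytope) misses that
  convex hull, and a separating hyperplane provides a.\<close>

lemma sum_list_take_le_sorted_desc:
  fixes xs ys :: "'a::linordered_ab_group_add list"
  assumes mset_eq: "mset xs = mset ys" and sorted: "sorted_wrt (\<ge>) ys"
  shows "sum_list (take j xs) \<le> sum_list (take j ys)"
proof (cases "0 < j \<and> j \<le> length ys")
  case False
  moreover have "length xs = length ys" using mset_eq by (metis size_mset)
  moreover have "sum_list xs = sum_list ys" using mset_eq by (metis sum_mset_sum_list)
  ultimately show ?thesis by auto
next
  case True
  have len: "length xs = length ys" using mset_eq by (metis size_mset)
  \<comment> \<open>\<open>t\<close> is the \<open>j\<close>-th largest entry; \<open>g\<close> bounds \<open>y - t\<close> from above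
    and is exact on the \<open>j\<close> largest entries\<close>
  define t where "t = ys ! (j - 1)"
  define g where "g y = max (y - t) 0" for y
  have ge_t: "t \<le> ys ! i" if "i < j" for i
    using sorted True that unfolding t_def sorted_wrt_iff_nth_less
    by (cases "i = j - 1") auto
  have le_t: "ys ! i \<le> t" if "j \<le> i" "i < length ys" for i
    using sorted True that unfolding t_def sorted_wrt_iff_nth_less by auto
  have "sum_list (take j xs) = (\<Sum>i<j. xs ! i)"
    using True len by (simp add: sum_list_sum_nth atLeast0LessThan min_absorb1)
  also have "\<dots> \<le> (\<Sum>i<j. g (xs ! i) + t)"
    by (intro sum_mono) (simp add: g_def flip: diff_le_eq)
  also have "\<dots> = (\<Sum>i<j. g (xs ! i)) + (\<Sum>i<j. t)" by (simp add: sum.distrib)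
  also have "(\<Sum>i<j. g (xs ! i)) \<le> sum_list (map g xs)"
    using True len by (simp add: sum_list_sum_nth atLeast0LessThan, intro sum_mono2) (auto simp: g_def)
  also have "sum_list (map g xs) = sum_list (map g ys)"
    by (metis mset_eq mset_map sum_mset_sum_list)
  also have "\<dots> = (\<Sum>i<j. g (ys ! i)) + (\<Sum>i\<in>{j..<length ys}. g (ys ! i))"
    using True sum.atLeastLessThan_concat[of 0 j "length ys" "\<lambda>i. g (ys ! i)"]
    by (simp add: sum_list_sum_nth atLeast0LessThan)
  also have "(\<Sum>i\<in>{j..<length ys}. g (ys ! i)) = 0"
    using le_t by (intro sum.neutral) (auto simp: g_def)
  also have "(\<Sum>i<j. g (ys ! i)) = (\<Sum>i<j. ys ! i - t)"
    using ge_t by (intro sum.cong) (auto simp: g_def)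
  also have "(\<Sum>i<j. ys ! i - t) + 0 + (\<Sum>i<j. t) = sum_list (take j ys)"
    using True by (simp add: sum_subtractf sum_list_sum_nth atLeast0LessThan min_absorb1)
  finally show ?thesis by simp
qed

lemma summation_by_parts:
  fixes b d :: "nat \<Rightarrow> 'a::comm_ring"
  shows "(\<Sum>i<Suc k. b i * d i)
           = b k * (\<Sum>i<Suc k. d i) + (\<Sum>i<k. (b i - b (Suc i)) * (\<Sum>l<Suc i. d l))"
  by (induction k) (simp_all add: algebra_simps)

lemma sum_mult_pos_of_partial_sums:
  fixes b d :: "nat \<Rightarrow> 'a::linordered_idom"
  assumes decreasing: "\<And>i. Suc i < n \<Longrightarrow> b (Suc i) < b i"
    and partial_nonneg: "\<And>j. j < n \<Longrightarrow> 0 \<le> (\<Sum>l<j. d l)"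
    and total_zero: "(\<Sum>l<n. d l) = 0"
    and nonzero: "\<exists>i<n. d i \<noteq> 0"
  shows "0 < (\<Sum>i<n. b i * d i)"
proof -
  obtain k where n: "n = Suc k" using nonzero by (cases n) auto
  have "\<exists>i<k. 0 < (\<Sum>l<Suc i. d l)"
  proof (rule ccontr)
    assume no_pos: "\<not> ?thesis"
    have zero: "(\<Sum>l<j. d l) = 0" if j_le: "j \<le> n" for j
    proof (cases "j = 0 \<or> j = n")
      case False
      obtain i where "j = Suc i" "i < k" using j_le n False by (cases j) auto
      then have "0 \<le> (\<Sum>l<j. d l)" "\<not> 0 < (\<Sum>l<j. d l)"
        using partial_nonneg[of j] no_pos n by auto
      then show ?thesis by simp
    qed (use total_zero in auto)
    have "d i = 0" if "i < n" for i
      using zero[of i] zero[of "Suc i"] that by simp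
    then show False using nonzero by blast
  qed
  then obtain i0 where i0: "i0 < k" "0 < (\<Sum>l<Suc i0. d l)" by blast
  have "0 < (\<Sum>i<k. (b i - b (Suc i)) * (\<Sum>l<Suc i. d l))"
  proof (rule sum_pos2[of _ i0])
    show "0 < (b i0 - b (Suc i0)) * (\<Sum>l<Suc i0. d l)"
      using decreasing[of i0] i0 n by simp
    show "0 \<le> (b i - b (Suc i)) * (\<Sum>l<Suc i. d l)" if "i \<in> {..<k}" for i
      using decreasing[of i] partial_nonneg[of "Suc i"] that n by simp
  qed (use i0 in auto)
  then show ?thesis using summation_by_parts[of b d k] total_zero n by simp
qed

definition entries_along :: "(nat \<Rightarrow> 'n::finite) \<Rightarrow> 'a^'n \<Rightarrow> 'a list" where
  "entries_along \<pi> x = map (\<lambda>i. x $ \<pi> i) [0..<CARD('n)]"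

lemma length_entries_along [simp]:
  fixes \<pi> :: "nat \<Rightarrow> 'n::finite"
  shows "length (entries_along \<pi> x) = CARD('n)"
  by (simp add: entries_along_def)

lemma sum_list_take_entries_along:
  fixes \<pi> :: "nat \<Rightarrow> 'n::finite" and x :: "'a::comm_monoid_add^'n"
  assumes "j \<le> CARD('n)"
  shows "sum_list (take j (entries_along \<pi> x)) = (\<Sum>i<j. x $ \<pi> i)"
  using assms by (simp add: entries_along_def take_map sum_list_sum_nth atLeast0LessThan)

lemma mset_entries_along:
  fixes \<pi> :: "nat \<Rightarrow> 'n::finite"
  assumes "bij_betw \<pi> {..<CARD('n)} UNIV"
  shows "mset (entries_along \<pi> x) = image_mset (\<lambda>i. x $ i) (mset_set UNIV)"
proof -
  have "mset (entries_along \<pi> x) = image_mset (\<lambda>i. x $ i) (image_mset \<pi> (mset_set {..<CARD('n)}))"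
    by (simp add: entries_along_def atLeast0LessThan multiset.map_comp o_def)
  then show ?thesis
    using assms image_mset_mset_set[of \<pi> "{..<CARD('n)}"] by (simp add: bij_betw_def)
qed

lemma mset_decr_sort: "mset (decr_sort x) = image_mset (\<lambda>i. x $ i) (mset_set UNIV)"
  by (simp add: decr_sort_def)

lemma sorted_decr_sort: "sorted_wrt (\<ge>) (decr_sort x)"
  by (simp add: decr_sort_def sorted_wrt_rev)

lemma length_decr_sort [simp]: "length (decr_sort (x :: real^'n)) = CARD('n)"
  by (metis mset_decr_sort size_image_mset size_mset size_mset_set)

lemma decr_sort_eq_entries_along:
  fixes \<pi> :: "nat \<Rightarrow> 'n::finite"
  assumes "bij_betw \<pi> {..<CARD('n)} UNIV"
    and "sorted_wrt (\<ge>) (entries_along \<pi> x)"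
  shows "decr_sort x = entries_along \<pi> x"
proof -
  have "mset (rev (decr_sort x)) = mset (rev (entries_along \<pi> x))"
    using assms(1) by (simp add: mset_decr_sort mset_entries_along)
  moreover have "sorted (rev (decr_sort x))" "sorted (rev (entries_along \<pi> x))"
    using sorted_decr_sort assms(2) by (simp_all add: sorted_wrt_rev)
  ultimately show ?thesis by (metis properties_for_sort rev_rev_ident)
qed

lemma obtain_permutation_sorted_along:
  fixes \<pi> :: "nat \<Rightarrow> 'n::finite" and x :: "real^'n"
  assumes \<pi>: "bij_betw \<pi> {..<CARD('n)} UNIV"
  obtains \<sigma> where "\<sigma> permutes UNIV" "entries_along \<pi> (\<chi> k. x $ \<sigma> k) = decr_sort x"
    "decr_sort (\<chi> k. x $ \<sigma> k) = decr_sort x"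
proof -
  obtain p where p: "p permutes {..<CARD('n)}" "permute_list p (entries_along \<pi> x) = decr_sort x"
    using mset_eq_permutation[of "decr_sort x" "entries_along \<pi> x"] \<pi>
    by (auto simp: mset_decr_sort mset_entries_along)
  define \<sigma> where "\<sigma> = \<pi> \<circ> p \<circ> inv_into {..<CARD('n)} \<pi>"
  have "bij_betw \<sigma> UNIV UNIV"
    unfolding \<sigma>_def using \<pi> permutes_imp_bij[OF p(1)]
    by (metis bij_betw_inv_into bij_betw_trans comp_assoc)
  then have "\<sigma> permutes UNIV" by (rule bij_imp_permutes) simp
  moreover have "entries_along \<pi> (\<chi> k. x $ \<sigma> k) = permute_list p (entries_along \<pi> x)"
    using \<pi> permutes_in_image[OF p(1)]
    by (auto simp: permute_list_def entries_along_def \<sigma>_def bij_betw_def inv_into_f_f)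
  then have sorted: "entries_along \<pi> (\<chi> k. x $ \<sigma> k) = decr_sort x" using p(2) by simp
  moreover have "decr_sort (\<chi> k. x $ \<sigma> k) = decr_sort x"
    using decr_sort_eq_entries_along[OF \<pi>] sorted sorted_decr_sort by metis
  ultimately show thesis using that by blast
qed

lemma inner_pos_if_majorizes:
  fixes \<pi> :: "nat \<Rightarrow> 'n::finite" and u x a :: "real^'n"
  assumes \<pi>: "bij_betw \<pi> {..<CARD('n)} UNIV"
    and u_sorted: "decr_sort u = entries_along \<pi> u"
    and x_sorted: "decr_sort x = entries_along \<pi> x"
    and majorizes: "majorizes u x" and distinct: "decr_sort u \<noteq> decr_sort x"
    and a_decreasing: "\<forall>i. Suc i < CARD('n) \<longrightarrow> a $ \<pi> (Suc i) < a $ \<pi> i"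
  shows "0 < a \<bullet> (u - x)"
proof -
  define d where "d i = u $ \<pi> i - x $ \<pi> i" for i
  have partial_sums: "(\<Sum>l<j. d l) = sum_list (take j (decr_sort u)) - sum_list (take j (decr_sort x))"
    if "j \<le> CARD('n)" for j
    using that by (simp add: d_def sum_subtractf sum_list_take_entries_along u_sorted x_sorted)
  have "a \<bullet> (u - x) = (\<Sum>i<CARD('n). a $ \<pi> i * d i)"
    using sum.reindex_bij_betw[OF \<pi>, of "\<lambda>i. a $ i * (u - x) $ i"]
    by (simp add: inner_vec_def d_def)
  also have "0 < \<dots>"
  proof (rule sum_mult_pos_of_partial_sums)
    show "0 \<le> (\<Sum>l<j. d l)" if "j < CARD('n)" for j
      using majorizes that partial_sums[of j] by (cases "j = 0") (auto simp: majorizes_def)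
    show "(\<Sum>l<CARD('n). d l) = 0"
      using majorizes partial_sums[of "CARD('n)"] by (simp add: majorizes_def)
    show "\<exists>i<CARD('n). d i \<noteq> 0"
    proof (rule ccontr)
      assume "\<not> ?thesis"
      then have "entries_along \<pi> u = entries_along \<pi> x"
        by (intro nth_equalityI) (auto simp: entries_along_def d_def)
      then show False using distinct u_sorted x_sorted by simp
    qed
  qed (use a_decreasing in auto)
  finally show ?thesis .
qed

lemma separating_hyperplane_conic_hull_polytope:
  fixes Y B :: "'a::euclidean_space set"
  assumes Y: "polytope Y" "Y \<noteq> {}" and B: "convex B" "compact B"
    and disjoint: "conic hull Y \<inter> B = {}"
  shows "\<exists>h. (\<forall>y\<in>Y. h \<bullet> y \<le> 0) \<and> (\<forall>z\<in>B. 0 < h \<bullet> z)"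
proof (cases "B = {}")
  case False
  have "closed (conic hull Y)" "convex (conic hull Y)"
    using Y closed_conic_hull_strong convex_conic_hull polytope_imp_convex by blast+
  then obtain h \<beta> where below: "\<forall>z\<in>conic hull Y. h \<bullet> z < \<beta>"
    and above: "\<forall>z\<in>B. \<beta> < h \<bullet> z"
    using separating_hyperplane_closed_compact[OF _ _ B False disjoint] by blast
  have "0 \<in> conic hull Y" using Y(2) by simp
  then have "0 < \<beta>" using below by fastforce
  \<comment> \<open>\<open>h\<close> is bounded above on the cone, hence nonpositive on it\<close>
  have "h \<bullet> y \<le> 0" if "y \<in> Y" for y
  proof (rule ccontr)
    assume "\<not> h \<bullet> y \<le> 0"
    then have "0 \<le> \<beta> / (h \<bullet> y)" using \<open>0 < \<beta>\<close> by simp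
    then have "(\<beta> / (h \<bullet> y)) *\<^sub>R y \<in> conic hull Y"
      using that unfolding conic_hull_explicit by blast
    then show False using below \<open>\<not> h \<bullet> y \<le> 0\<close> by fastforce
  qed
  then show ?thesis using above \<open>0 < \<beta>\<close> by fastforce
qed (auto intro: exI[of _ 0])

definition axis_diff_along :: "(nat \<Rightarrow> 'n::finite) \<Rightarrow> nat \<Rightarrow> real^'n" where
  "axis_diff_along \<pi> i = axis (\<pi> i) 1 - axis (\<pi> (Suc i)) 1"

lemma prefix_sum_axis_diff_along:
  fixes \<pi> :: "nat \<Rightarrow> 'n::finite"
  assumes \<pi>: "bij_betw \<pi> {..<CARD('n)} UNIV" and "Suc m < CARD('n)" "j \<le> CARD('n)"
  shows "(\<Sum>i<j. axis_diff_along \<pi> m $ \<pi> i) = (if j = Suc m then 1 else 0)"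
proof -
  have "axis_diff_along \<pi> m $ \<pi> i = (if i = m then 1 else 0) - (if i = Suc m then 1 else 0)"
    if "i < j" for i
  proof -
    have "inj_on \<pi> {..<CARD('n)}" using \<pi> by (simp add: bij_betw_def)
    then show ?thesis
      using assms(2,3) that by (auto simp: axis_diff_along_def axis_def inj_on_eq_iff)
  qed
  then have "(\<Sum>i<j. axis_diff_along \<pi> m $ \<pi> i)
               = (\<Sum>i<j. (if i = m then 1 else 0) - (if i = Suc m then 1 else 0))"
    by (intro sum.cong) auto
  also have "\<dots> = (if j = Suc m then 1 else 0)"
    by (simp add: sum_subtractf)
  finally show ?thesis .
qed

lemma prefix_sums_convex_hull_axis_diff_along:
  fixes \<pi> :: "nat \<Rightarrow> 'n::finite"
  assumes \<pi>: "bij_betw \<pi> {..<CARD('n)} UNIV"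
    and "k \<in> convex hull (axis_diff_along \<pi> ` {i. Suc i < CARD('n)})"
  shows "\<forall>j\<le>CARD('n). 0 \<le> (\<Sum>i<j. k $ \<pi> i)" "(\<Sum>i<CARD('n). k $ \<pi> i) = 0"
    "\<exists>j<CARD('n). 0 < (\<Sum>i<j. k $ \<pi> i)"
proof -
  define S where "S = {k :: real^'n. (\<forall>j\<le>CARD('n). 0 \<le> (\<Sum>i<j. k $ \<pi> i))
    \<and> (\<Sum>i<CARD('n). k $ \<pi> i) = 0 \<and> (\<Sum>j<CARD('n). \<Sum>i<j. k $ \<pi> i) = 1}"
  have "convex S"
    by (auto simp: S_def convex_def sum.distrib simp flip: sum_distrib_left)
  moreover have "axis_diff_along \<pi> m \<in> S" if "Suc m < CARD('n)" for m
    using that by (simp add: S_def prefix_sum_axis_diff_along[OF \<pi>])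
  ultimately have "convex hull (axis_diff_along \<pi> ` {i. Suc i < CARD('n)}) \<subseteq> S"
    by (intro hull_minimal) auto
  then have "k \<in> S" using assms(2) by blast
  then show "\<forall>j\<le>CARD('n). 0 \<le> (\<Sum>i<j. k $ \<pi> i)" "(\<Sum>i<CARD('n). k $ \<pi> i) = 0"
    by (simp_all add: S_def)
  show "\<exists>j<CARD('n). 0 < (\<Sum>i<j. k $ \<pi> i)"
  proof (rule ccontr)
    assume no_pos: "\<not> ?thesis"
    have "(\<Sum>j<CARD('n). \<Sum>i<j. k $ \<pi> i) \<le> 0"
      by (rule sum_nonpos) (use no_pos not_less in blast)
    then show False using \<open>k \<in> S\<close> by (simp add: S_def)
  qed
qed

lemma prefix_sum_le_sum_take_decr_sort:
  fixes \<pi> :: "nat \<Rightarrow> 'n::finite" and x :: "real^'n"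
  assumes \<pi>: "bij_betw \<pi> {..<CARD('n)} UNIV" and "j \<le> CARD('n)"
  shows "(\<Sum>i<j. x $ \<pi> i) \<le> sum_list (take j (decr_sort x))"
  using sum_list_take_le_sorted_desc[of "entries_along \<pi> x" "decr_sort x" j] assms
  by (simp add: mset_entries_along mset_decr_sort sorted_decr_sort sum_list_take_entries_along)

lemma majorizes_if_prefix_sums_ge:
  fixes \<pi> :: "nat \<Rightarrow> 'n::finite" and x x' :: "real^'n"
  assumes \<pi>: "bij_betw \<pi> {..<CARD('n)} UNIV"
    and x'_sorted: "decr_sort x' = entries_along \<pi> x'"
    and ge: "\<And>j. j \<le> CARD('n) \<Longrightarrow> (\<Sum>i<j. x' $ \<pi> i) \<le> (\<Sum>i<j. x $ \<pi> i)"
    and total: "(\<Sum>i<CARD('n). x $ \<pi> i) = (\<Sum>i<CARD('n). x' $ \<pi> i)"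
    and strict: "j0 \<le> CARD('n)" "(\<Sum>i<j0. x' $ \<pi> i) < (\<Sum>i<j0. x $ \<pi> i)"
  shows "majorizes x x' \<and> decr_sort x \<noteq> decr_sort x'"
proof (intro conjI)
  have x'_take: "sum_list (take j (decr_sort x')) = (\<Sum>i<j. x' $ \<pi> i)" if "j \<le> CARD('n)" for j
    using that by (simp add: x'_sorted sum_list_take_entries_along)
  have x_take: "(\<Sum>i<j. x $ \<pi> i) \<le> sum_list (take j (decr_sort x))" if "j \<le> CARD('n)" for j
    using prefix_sum_le_sum_take_decr_sort[OF \<pi> that] .
  have "sum_list (decr_sort x) = sum_list (entries_along \<pi> x)"
    using \<pi> by (metis mset_decr_sort mset_entries_along sum_mset_sum_list)
  also have "\<dots> = (\<Sum>i<CARD('n). x $ \<pi> i)"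
    using sum_list_take_entries_along[of "CARD('n)" \<pi> x] by simp
  finally have "sum_list (decr_sort x) = sum_list (decr_sort x')"
    using total x'_take[of "CARD('n)"] by simp
  moreover have "sum_list (take j (decr_sort x')) \<le> sum_list (take j (decr_sort x))"
    if "j < CARD('n)" for j
    using ge[of j] x_take[of j] x'_take[of j] that by simp
  ultimately show "majorizes x x'" by (simp add: majorizes_def)
  show "decr_sort x \<noteq> decr_sort x'"
    using strict x'_take[of j0] x_take[of j0] by auto
qed

lemma majorizes_if_scaled_diff_in_convex_hull_axis_diff_along:
  fixes \<pi> :: "nat \<Rightarrow> 'n::finite" and x x' :: "real^'n"
  assumes \<pi>: "bij_betw \<pi> {..<CARD('n)} UNIV"
    and x'_sorted: "decr_sort x' = entries_along \<pi> x'"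
    and "0 \<le> c" and "c *\<^sub>R (x - x') \<in> convex hull (axis_diff_along \<pi> ` {i. Suc i < CARD('n)})"
  shows "majorizes x x' \<and> decr_sort x \<noteq> decr_sort x'"
proof -
  note prefix = prefix_sums_convex_hull_axis_diff_along[OF \<pi> assms(4)]
  have scaled: "(\<Sum>i<j. (c *\<^sub>R (x - x')) $ \<pi> i) = c * ((\<Sum>i<j. x $ \<pi> i) - (\<Sum>i<j. x' $ \<pi> i))"
    for j
    by (simp flip: sum_distrib_left sum_subtractf)
  obtain j0 where j0: "j0 < CARD('n)" "0 < (\<Sum>i<j0. (c *\<^sub>R (x - x')) $ \<pi> i)"
    using prefix(3) by blast
  then have "0 < c" using \<open>0 \<le> c\<close> unfolding scaled by (cases "c = 0") simp_all
  show ?thesis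
  proof (rule majorizes_if_prefix_sums_ge[OF \<pi> x'_sorted])
    show "(\<Sum>i<j. x' $ \<pi> i) \<le> (\<Sum>i<j. x $ \<pi> i)" if "j \<le> CARD('n)" for j
      using prefix(1) that \<open>0 < c\<close> unfolding scaled by (auto simp: zero_le_mult_iff)
    show "(\<Sum>i<CARD('n). x $ \<pi> i) = (\<Sum>i<CARD('n). x' $ \<pi> i)"
      using prefix(2) \<open>0 < c\<close> unfolding scaled by simp
    show "(\<Sum>i<j0. x' $ \<pi> i) < (\<Sum>i<j0. x $ \<pi> i)"
      using j0(2) \<open>0 < c\<close> unfolding scaled by (simp add: zero_less_mult_iff)
  qed (use j0 in simp)
qed

lemma exists_decreasing_functional_if_not_majorized:
  fixes P :: "(real^'n) set" and x' :: "real^'n" and \<pi> :: "nat \<Rightarrow> 'n"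
  assumes P: "polytope P" "x' \<in> P" and \<pi>: "bij_betw \<pi> {..<CARD('n)} UNIV"
    and x'_sorted: "decr_sort x' = entries_along \<pi> x'"
    and none: "\<not> (\<exists>x\<in>P. majorizes x x' \<and> decr_sort x \<noteq> decr_sort x')"
  shows "\<exists>a. (\<forall>i. Suc i < CARD('n) \<longrightarrow> a $ \<pi> (Suc i) < a $ \<pi> i)
               \<and> (\<forall>x\<in>P. a \<bullet> (x - x') \<le> 0)"
proof -
  define Y where "Y = (\<lambda>x. x - x') ` P"
  define B where "B = convex hull (axis_diff_along \<pi> ` {i. Suc i < CARD('n)})"
  have "Y = (+) (- x') ` P" by (simp add: Y_def)
  then have "polytope Y" using P(1) polytope_translation_eq by blast
  have "finite {i. Suc i < CARD('n)}" by (rule finite_subset[of _ "{..<CARD('n)}"]) auto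
  then have "compact B" unfolding B_def by (intro finite_imp_compact_convex_hull finite_imageI)
  have "conic hull Y \<inter> B = {}"
  proof (intro equals0I)
    fix k assume "k \<in> conic hull Y \<inter> B"
    then obtain c x where "0 \<le> c" "x \<in> P" "c *\<^sub>R (x - x') \<in> B"
      unfolding Y_def conic_hull_explicit by blast
    then show False
      using majorizes_if_scaled_diff_in_convex_hull_axis_diff_along[OF \<pi> x'_sorted] none
      unfolding B_def by blast
  qed
  moreover have "Y \<noteq> {}" using P(2) by (auto simp: Y_def)
  moreover have "convex B" by (simp add: B_def)
  ultimately obtain h where h: "\<forall>y\<in>Y. h \<bullet> y \<le> 0" "\<forall>z\<in>B. 0 < h \<bullet> z"
    using separating_hyperplane_conic_hull_polytope \<open>polytope Y\<close> \<open>compact B\<close> by blast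
  have "h $ \<pi> (Suc i) < h $ \<pi> i" if "Suc i < CARD('n)" for i
  proof -
    have "axis_diff_along \<pi> i \<in> B" using that by (auto simp: B_def intro: hull_inc)
    then show ?thesis using h(2) by (fastforce simp: axis_diff_along_def inner_diff_right inner_axis)
  qed
  moreover have "h \<bullet> (x - x') \<le> 0" if "x \<in> P" for x using h(1) that by (simp add: Y_def)
  ultimately show ?thesis by blast
qed

theorem mainTheorem13:
  fixes P :: "(real^'n) set" and x' :: "real^'n" and \<pi> :: "nat \<Rightarrow> 'n"
  assumes "polytope P"
    and "perm_invariant P"
    and "x' \<in> P"
    and "bij_betw \<pi> {..<CARD('n)} (UNIV :: 'n set)"
    and "\<forall>i. Suc i < CARD('n) \<longrightarrow> x' $ \<pi> i \<ge> x' $ \<pi> (Suc i)"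
  shows "(\<exists>u'\<in>P. majorizes u' x' \<and> decr_sort u' \<noteq> decr_sort x') \<longleftrightarrow>
         \<not> (\<exists>a :: real^'n. (\<forall>i. Suc i < CARD('n) \<longrightarrow> a $ \<pi> i > a $ \<pi> (Suc i)) \<and>
                 (\<forall>x\<in>P. (\<Sum>i\<in>UNIV. a $ i * (x $ i - x' $ i)) \<le> 0))"
proof -
  have x'_sorted: "decr_sort x' = entries_along \<pi> x'"
    using assms(4,5) by (intro decr_sort_eq_entries_along)
      (auto simp: entries_along_def sorted_wrt_iff_nth_Suc_transp)
  have inner: "(\<Sum>i\<in>UNIV. a $ i * (x $ i - x' $ i)) = a \<bullet> (x - x')" for a x :: "real^'n"
    by (simp add: inner_vec_def)
  show ?thesis
  proof
    assume "\<exists>u'\<in>P. majorizes u' x' \<and> decr_sort u' \<noteq> decr_sort x'"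
    then obtain u' where u': "u' \<in> P" "majorizes u' x'" "decr_sort u' \<noteq> decr_sort x'" by blast
    obtain \<sigma> where \<sigma>: "\<sigma> permutes UNIV" "entries_along \<pi> (\<chi> k. u' $ \<sigma> k) = decr_sort u'"
      "decr_sort (\<chi> k. u' $ \<sigma> k) = decr_sort u'"
      using obtain_permutation_sorted_along[OF assms(4)] .
    define u where "u = (\<chi> k. u' $ \<sigma> k)"
    have "u \<in> P" using assms(2) u'(1) \<sigma>(1) by (simp add: perm_invariant_def u_def)
    have "0 < a \<bullet> (u - x')" if "\<forall>i. Suc i < CARD('n) \<longrightarrow> a $ \<pi> (Suc i) < a $ \<pi> i" for a
      using u' \<sigma>(2,3)
      by (intro inner_pos_if_majorizes[OF assms(4) _ x'_sorted _ _ that]) (simp_all add: u_def majorizes_def)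
    then show "\<not> (\<exists>a :: real^'n. (\<forall>i. Suc i < CARD('n) \<longrightarrow> a $ \<pi> i > a $ \<pi> (Suc i)) \<and>
                 (\<forall>x\<in>P. (\<Sum>i\<in>UNIV. a $ i * (x $ i - x' $ i)) \<le> 0))"
      using \<open>u \<in> P\<close> by (force simp: inner)
  next
    assume "\<not> (\<exists>a :: real^'n. (\<forall>i. Suc i < CARD('n) \<longrightarrow> a $ \<pi> i > a $ \<pi> (Suc i)) \<and>
                 (\<forall>x\<in>P. (\<Sum>i\<in>UNIV. a $ i * (x $ i - x' $ i)) \<le> 0))"
    then show "\<exists>u'\<in>P. majorizes u' x' \<and> decr_sort u' \<noteq> decr_sort x'"
      using exists_decreasing_functional_if_not_majorized[OF assms(1,3,4) x'_sorted]
      unfolding inner by blast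
  qed
qed

end
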